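(* Let $\mathbb{F}$ be a field of characteristic $2$, and let $\mathcal{H}=(Q_0,Q_1,\beta)$ be an undirected graph encoded via the symmetric quadratic encoding. Let $\rho:T(\mathbb{F}^{Q_0})\to\mathbb{F}^{Q_0}$ be the linear map with $\rho(1)=0$ and $\rho(u_1\otimes u_2\otimes\cdots\otimes u_k)=u_1$ for $k\ge1$, $u_i\in Q_0$. Then $\mathrm{Ker}(\rho\circ\partial_\beta)=\mathrm{Ker}(B^{\mathrm{cl}})\subseteq\mathbb{F}^{Q_1}$.
   Context: $T(\mathbb{F}^{Q_0})=\bigoplus_{k\ge0}(\mathbb{F}^{Q_0})^{\otimes k}$ with $v\in Q_0$ identified with $\mathbf{1}_v$ and $1$ the unit of $T^0=\mathbb{F}$; the tensors $u_1\otimes\cdots\otimes u_k$ ($u_i\in Q_0$) and $1$ form a basis. Symmetric quadratic encoding: $Q_0$ vertex set, $Q_1$ edge set, $\psi:Q_1\to2^{Q_0}$ with $1\le|\psi(e)|\le2$, and $\beta(\mathbf{1}_e)=(A_e,B_e)$ with $(A_e,B_e)=(2(v\otimes v),1)$ if $\psi(e)=\{v\}$ (a loop) and $(u\otimes v+v\otimes u,1)$ if $\psi(e)=\{u,v\}$, $u\ne v$. $\partial_\beta:\mathbb{F}^{Q_1}\to T(\mathbb{F}^{Q_0})$ is linear with $\mathbf{1}_e\mapsto B_e-A_e$. The classical undirected incidence matrix $B^{\mathrm{cl}}\in\{0,1\}^{Q_0\times Q_1}$ has $B^{\mathrm{cl}}_{x,e}=1$ if $x\in\psi(e)$ and $e$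 is a non-loop edge, and $0$ otherwise, viewed as a linear map $\mathbb{F}^{Q_1}\to\mathbb{F}^{Q_0}$. *)

theory Defs
  imports Main "HOL-Library.Poly_Mapping"
begin

text \<open>The tensor algebra T(F^Q0) is modelled as finitely supported functions on words
 over Q0: the word [u1,...,uk] stands for the basis tensor u1 (x) ... (x) uk and the
 empty word [] stands for the unit 1 of T^0 = F.\<close>

type_synonym ('v,'a) tensor = "'v list \<Rightarrow>\<^sub>0 'a"

definition tsmult :: "'a::semiring_0 \<Rightarrow> ('v,'a) tensor \<Rightarrow> ('v,'a) tensor" where
  "tsmult c p = Poly_Mapping.map (\<lambda>x. c * x) p"

definition valid_graph :: "('e \<Rightarrow> 'v set) \<Rightarrow> bool" where
  "valid_graph \<psi> \<longleftrightarrow> (\<forall>e. 1 \<le> card (\<psi> e) \<and> card (\<psi> e) \<le> 2)"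

definition enc_A :: "('e \<Rightarrow> 'v set) \<Rightarrow> 'e \<Rightarrow> ('v,'a::comm_ring_1) tensor" where
  "enc_A \<psi> e =
     (if card (\<psi> e) = 1
      then (let v = the_elem (\<psi> e) in Poly_Mapping.single [v, v] 2)
      else (let u = (SOME u. u \<in> \<psi> e); v = (SOME v. v \<in> \<psi> e \<and> v \<noteq> u) in
              Poly_Mapping.single [u, v] 1 + Poly_Mapping.single [v, u] 1))"

definition enc_B :: "('e \<Rightarrow> 'v set) \<Rightarrow> 'e \<Rightarrow> ('v,'a::comm_ring_1) tensor" where
  "enc_B \<psi> e = Poly_Mapping.single [] 1"

definition bdry :: "('e::finite \<Rightarrow> 'v set) \<Rightarrow> ('e \<Rightarrow> 'a::comm_ring_1) \<Rightarrow> ('v,'a) tensor" where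
  "bdry \<psi> x = (\<Sum>e\<in>UNIV. tsmult (x e) (enc_B \<psi> e - enc_A \<psi> e))"

definition rho :: "('v,'a::comm_ring_1) tensor \<Rightarrow> ('v \<Rightarrow> 'a)" where
  "rho p = (\<lambda>v. \<Sum>w\<in>Poly_Mapping.keys p. if w \<noteq> [] \<and> hd w = v then Poly_Mapping.lookup p w else 0)"

definition Bcl :: "('e::finite \<Rightarrow> 'v set) \<Rightarrow> ('e \<Rightarrow> 'a::comm_ring_1) \<Rightarrow> ('v \<Rightarrow> 'a)" where
  "Bcl \<psi> x = (\<lambda>v. \<Sum>e\<in>UNIV. (if v \<in> \<psi> e \<and> card (\<psi> e) = 2 then 1 else 0) * x e)"

end

theory Submission
  imports Defs
begin

text \<open>The map \<rho> is linear, kills the unit \<open>B\<^sub>e = 1\<close>, and sends \<open>A\<^sub>e\<close> to \<open>u + v\<close> for an edge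
  \<open>{u, v}\<close> and to \<open>2 v\<close> for a loop at \<open>v\<close>. Hence \<open>\<rho> \<circ> \<partial>\<^sub>\<beta>\<close> is \<open>-B\<^sup>c\<^sup>l\<close> up to twice the loop
  contributions, which vanish in characteristic 2, so the two maps have the same kernel.\<close>

lemma lookup_tsmult: "Poly_Mapping.lookup (tsmult c p) w = c * Poly_Mapping.lookup p w"
  unfolding tsmult_def by (simp add: Poly_Mapping.map.rep_eq when_def)

lemma uminus_eq_tsmult: "- p = tsmult (- 1) (p :: ('v, 'a::ring_1) tensor)"
  by (rule poly_mapping_eqI) (simp add: lookup_tsmult)

lemma rho_eq_sum_superset:
  assumes "finite S" "Poly_Mapping.keys p \<subseteq> S"
  shows "rho p v = (\<Sum>w\<in>S. if w \<noteq> [] \<and> hd w = v then Poly_Mapping.lookup p w else 0)"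
  unfolding rho_def
  by (rule sum.mono_neutral_left) (use assms in \<open>auto simp: in_keys_iff\<close>)

lemma rho_zero: "rho 0 v = 0"
  by (simp add: rho_def)

lemma rho_add: "rho (p + q) v = rho p v + rho q v"
proof -
  let ?S = "Poly_Mapping.keys p \<union> Poly_Mapping.keys q"
  have "Poly_Mapping.keys (p + q) \<subseteq> ?S"
    by (simp add: keys_add)
  then show ?thesis
    using rho_eq_sum_superset[of ?S p v] rho_eq_sum_superset[of ?S q v]
      rho_eq_sum_superset[of ?S "p + q" v]
    by (simp add: lookup_add sum.distrib[symmetric] if_distrib cong: if_cong)
qed

lemma rho_tsmult: "rho (tsmult c p) v = c * rho p v"
proof -
  have "Poly_Mapping.keys (tsmult c p) \<subseteq> Poly_Mapping.keys p"
    by (auto simp: in_keys_iff lookup_tsmult)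
  then show ?thesis
    using rho_eq_sum_superset[of "Poly_Mapping.keys p" "tsmult c p" v]
      rho_eq_sum_superset[of "Poly_Mapping.keys p" p v]
    by (simp add: lookup_tsmult sum_distrib_left if_distrib cong: if_cong)
qed

lemma rho_diff: "rho (p - q) v = rho p v - rho q v"
  using rho_add[of p "- q" v] rho_tsmult[of "- 1" q v] by (simp add: uminus_eq_tsmult[symmetric])

lemma rho_sum: "rho (\<Sum>e\<in>A. f e) v = (\<Sum>e\<in>A. rho (f e) v)"
  by (induction A rule: infinite_finite_induct) (auto simp: rho_zero rho_add)

lemma rho_single: "rho (Poly_Mapping.single w c) v = (if w \<noteq> [] \<and> hd w = v then c else 0)"
  using rho_eq_sum_superset[of "{w}" "Poly_Mapping.single w c" v] by simp

lemma rho_enc_B: "rho (enc_B \<psi> e) v = 0"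
  by (simp add: enc_B_def rho_single)

lemma enc_A_edge:
  assumes "card (\<psi> e) = 2"
  obtains u w where "u \<noteq> w" "\<psi> e = {u, w}"
    "enc_A \<psi> e = Poly_Mapping.single [u, w] 1 + Poly_Mapping.single [w, u] 1"
proof -
  obtain a b where ab: "\<psi> e = {a, b}" "a \<noteq> b"
    using assms by (meson card_2_iff)
  define u where "u = (SOME u. u \<in> \<psi> e)"
  define w where "w = (SOME w. w \<in> \<psi> e \<and> w \<noteq> u)"
  have u: "u \<in> \<psi> e"
    unfolding u_def by (rule someI[of _ a]) (simp add: ab)
  have "\<exists>w. w \<in> \<psi> e \<and> w \<noteq> u"
    using u ab by auto
  then have w: "w \<in> \<psi> e \<and> w \<noteq> u"
    unfolding w_def by (rule someI_ex)
  show thesis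
  proof (rule that[of u w])
    show "u \<noteq> w"
      using w by blast
    show "\<psi> e = {u, w}"
      using u w ab by auto
    show "enc_A \<psi> e = Poly_Mapping.single [u, w] 1 + Poly_Mapping.single [w, u] 1"
      using assms unfolding enc_A_def u_def w_def Let_def by simp
  qed
qed

lemma rho_enc_A:
  fixes \<psi> :: "'e \<Rightarrow> 'v set"
  assumes "1 \<le> card (\<psi> e)" "card (\<psi> e) \<le> 2"
  shows "rho (enc_A \<psi> e :: ('v, 'a::comm_ring_1) tensor) v =
    (if v \<in> \<psi> e \<and> card (\<psi> e) = 2 then 1 else if \<psi> e = {v} then 2 else 0)"
proof (cases "card (\<psi> e) = 1")
  case True
  then obtain a where "\<psi> e = {a}"
    using card_1_singletonE by blast
  with True show ?thesis
    by (simp add: enc_A_def rho_single)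
next
  case False
  with assms have "card (\<psi> e) = 2"
    by linarith
  then obtain u w where uw: "u \<noteq> w" "\<psi> e = {u, w}"
    and enc: "enc_A \<psi> e = (Poly_Mapping.single [u, w] 1 + Poly_Mapping.single [w, u] 1
      :: ('v, 'a) tensor)"
    by (rule enc_A_edge)
  have "\<psi> e \<noteq> {v}"
    using \<open>card (\<psi> e) = 2\<close> by auto
  with uw show ?thesis
    unfolding enc by (simp add: rho_add rho_single)
qed

lemma rho_bdry:
  assumes "valid_graph \<psi>"
  shows "rho (bdry \<psi> x) v = - Bcl \<psi> x v - 2 * (\<Sum>e | \<psi> e = {v}. x e)"
proof -
  have "rho (bdry \<psi> x) v = - (\<Sum>e\<in>UNIV. x e * rho (enc_A \<psi> e) v)"
    by (simp add: bdry_def rho_sum rho_tsmult rho_diff rho_enc_B sum_negf)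
  also have "\<dots> = - (\<Sum>e\<in>UNIV. (if v \<in> \<psi> e \<and> card (\<psi> e) = 2 then 1 else 0) * x e
                     + 2 * (if \<psi> e = {v} then x e else 0))"
    using assms by (intro arg_cong[where f = uminus] sum.cong) (auto simp: valid_graph_def rho_enc_A)
  also have "\<dots> = - Bcl \<psi> x v - 2 * (\<Sum>e | \<psi> e = {v}. x e)"
    by (simp add: Bcl_def sum.distrib sum_distrib_left[symmetric] sum.If_cases)
  finally show ?thesis .
qed

theorem theorem5p7:
  fixes \<psi> :: "'e::finite \<Rightarrow> 'v::finite set"
  assumes "CHAR('a::field) = 2"
    and "valid_graph \<psi>"
  shows "{x :: 'e \<Rightarrow> 'a. rho (bdry \<psi> x) = (\<lambda>_. 0)} = {x. Bcl \<psi> x = (\<lambda>_. 0)}"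
proof -
  have "(2::'a) = 0"
    using assms(1) by (metis of_nat_CHAR of_nat_numeral)
  then have "rho (bdry \<psi> x) v = - Bcl \<psi> x v" for x :: "'e \<Rightarrow> 'a" and v
    using rho_bdry[OF assms(2), of x v] by simp
  then show ?thesis
    by (auto simp: fun_eq_iff)
qed

end
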